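(* Let $\mathbb{K}$ be an algebraically closed field of characteristic $p$, with $p=0$ or $p>n$. Let $(\Lambda_1,\Lambda_2,\Lambda_3)$ be a regular dual $3$-net of order $n\ge4$ in $PG(2,\mathbb{K})$. Then the three lines containing the components are not concurrent, i.e. they are the sides of a triangle (the net is triangular).
   Context: A dual $3$-net of order $n$ in $PG(2,\mathbb{K})$ is a triple $(\Lambda_1,\Lambda_2,\Lambda_3)$ of pairwise disjoint point sets, each of size $n$, such that every line meeting two distinct components meets each component in exactly one point. It is regular if its three components are contained in three (distinct) lines, one component on each line; it is triangular if these three lines are the sides of a triangle. *)

theory Defs
  imports "HOL-Computational_Algebra.Polynomial"
begin

text \<open>Points and lines of the projective plane PG(2,K) are represented by their unique normalized
homogeneous coordinate vectors (first nonzero coordinate equal to 1).\<close>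

definition normalized :: "'a::field \<times> 'a \<times> 'a \<Rightarrow> bool" where
  "normalized v = (case v of (x, y, z) \<Rightarrow>
      x = 1 \<or> (x = 0 \<and> y = 1) \<or> (x = 0 \<and> y = 0 \<and> z = 1))"

definition proj_points :: "('a::field \<times> 'a \<times> 'a) set" where
  "proj_points = {v. normalized v}"

definition proj_lines :: "('a::field \<times> 'a \<times> 'a) set" where
  "proj_lines = {v. normalized v}"

definition incident :: "'a::field \<times> 'a \<times> 'a \<Rightarrow> 'a \<times> 'a \<times> 'a \<Rightarrow> bool" where
  "incident P l = (case P of (x, y, z) \<Rightarrow> case l of (a, b, c) \<Rightarrow> a * x + b * y + c * z = 0)"

definition points_on :: "'a::field \<times> 'a \<times> 'a \<Rightarrow> ('a \<times> 'a \<times> 'a) set" where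
  "points_on l = {P \<in> proj_points. incident P l}"

definition dual_3net ::
  "('a::field \<times> 'a \<times> 'a) set \<Rightarrow> ('a \<times> 'a \<times> 'a) set \<Rightarrow> ('a \<times> 'a \<times> 'a) set \<Rightarrow> nat \<Rightarrow> bool" where
  "dual_3net L1 L2 L3 n =
     (let L = (\<lambda>i::nat. if i = 1 then L1 else if i = 2 then L2 else L3) in
       (\<forall>i\<in>{1,2,3}. L i \<subseteq> proj_points \<and> finite (L i) \<and> card (L i) = n) \<and>
       (\<forall>i\<in>{1,2,3}. \<forall>j\<in>{1,2,3}. i \<noteq> j \<longrightarrow> L i \<inter> L j = {}) \<and>
       (\<forall>l\<in>proj_lines. (\<exists>i\<in>{1,2,3}. \<exists>j\<in>{1,2,3}. i \<noteq> j \<and>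
            points_on l \<inter> L i \<noteq> {} \<and> points_on l \<inter> L j \<noteq> {}) \<longrightarrow>
          (\<forall>k\<in>{1,2,3}. card (points_on l \<inter> L k) = 1)))"

definition regular_3net ::
  "('a::field \<times> 'a \<times> 'a) set \<Rightarrow> ('a \<times> 'a \<times> 'a) set \<Rightarrow> ('a \<times> 'a \<times> 'a) set \<Rightarrow> bool" where
  "regular_3net L1 L2 L3 =
     (\<exists>l1\<in>proj_lines. \<exists>l2\<in>proj_lines. \<exists>l3\<in>proj_lines.
        l1 \<noteq> l2 \<and> l1 \<noteq> l3 \<and> l2 \<noteq> l3 \<and>
        L1 \<subseteq> points_on l1 \<and> L2 \<subseteq> points_on l2 \<and> L3 \<subseteq> points_on l3)"

definition triangular_3net ::
  "('a::field \<times> 'a \<times> 'a) set \<Rightarrow> ('a \<times> 'a \<times> 'a) set \<Rightarrow> ('a \<times> 'a \<times> 'a) set \<Rightarrow> bool" where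
  "triangular_3net L1 L2 L3 =
     (\<exists>l1\<in>proj_lines. \<exists>l2\<in>proj_lines. \<exists>l3\<in>proj_lines.
        l1 \<noteq> l2 \<and> l1 \<noteq> l3 \<and> l2 \<noteq> l3 \<and>
        L1 \<subseteq> points_on l1 \<and> L2 \<subseteq> points_on l2 \<and> L3 \<subseteq> points_on l3 \<and>
        points_on l1 \<inter> points_on l2 \<inter> points_on l3 = {})"

end

theory Submission
  imports Defs
begin

text \<open>Suppose the three sides pass through a common point \<open>P\<close>. In projective coordinates
  \<open>(U : V : W)\<close> with \<open>P = (0 : 0 : 1)\<close>, \<open>l\<^sub>1 : V = 0\<close> and \<open>l\<^sub>2 : U = 0\<close>, the third side is
  \<open>V = s U\<close>, and with the affine coordinate \<open>W/U\<close> on \<open>l\<^sub>1, l\<^sub>3\<close> and \<open>W/V\<close> on \<open>l\<^sub>2\<close>, points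
  \<open>a, b, c\<close> of the three components are collinear iff \<open>c = a + s b\<close>. Hence any two points
  \<open>a \<noteq> a'\<close> of \<open>\<Lambda>\<^sub>1\<close> induce a nonzero translation mapping the at most \<open>n\<close> coordinates of
  \<open>\<Lambda>\<^sub>2\<close> into themselves, which is impossible in characteristic \<open>0\<close> or \<open>> n\<close>.
  The argument works over any field and needs only \<open>n \<ge> 2\<close>.\<close>

definition det3 :: "'a::comm_ring_1 \<times> 'a \<times> 'a \<Rightarrow> 'a \<times> 'a \<times> 'a \<Rightarrow> 'a \<times> 'a \<times> 'a \<Rightarrow> 'a" where
  "det3 a b c = (case a of (a1, a2, a3) \<Rightarrow> case b of (b1, b2, b3) \<Rightarrow> case c of (c1, c2, c3) \<Rightarrow>
     a1 * (b2 * c3 - b3 * c2) - a2 * (b1 * c3 - b3 * c1) + a3 * (b1 * c2 - b2 * c1))"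

definition cross :: "'a::comm_ring_1 \<times> 'a \<times> 'a \<Rightarrow> 'a \<times> 'a \<times> 'a \<Rightarrow> 'a \<times> 'a \<times> 'a" where
  "cross b c = (case b of (b1, b2, b3) \<Rightarrow> case c of (c1, c2, c3) \<Rightarrow>
     (b2 * c3 - b3 * c2, b3 * c1 - b1 * c3, b1 * c2 - b2 * c1))"

definition proj_normalize :: "'a::field \<times> 'a \<times> 'a \<Rightarrow> 'a \<times> 'a \<times> 'a" where
  "proj_normalize v = (case v of (x, y, z) \<Rightarrow>
     if x \<noteq> 0 then (1, y / x, z / x) else if y \<noteq> 0 then (0, 1, z / y) else (0, 0, 1))"

definition line_through :: "'a::field \<times> 'a \<times> 'a \<Rightarrow> 'a \<times> 'a \<times> 'a \<Rightarrow> 'a \<times> 'a \<times> 'a" where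
  "line_through X Y = proj_normalize (cross X Y)"

lemma det3_swap12: "det3 b a c = - det3 a b c"
  by (cases a; cases b; cases c) (simp add: det3_def algebra_simps)

lemma det3_swap23: "det3 a c b = - det3 a b c"
  by (cases a; cases b; cases c) (simp add: det3_def algebra_simps)

lemma det3_rotate: "det3 c a b = det3 a b c"
  by (cases a; cases b; cases c) (simp add: det3_def algebra_simps)

lemma det3_repeated [simp]: "det3 a a b = 0" "det3 a b a = 0" "det3 a b b = 0"
  by (cases a; cases b; simp add: det3_def algebra_simps)+

lemma det3_eq_inner_cross:
  "det3 (x1, x2, x3) b c = (case cross b c of (r1, r2, r3) \<Rightarrow> r1 * x1 + r2 * x2 + r3 * x3)"
  by (cases b; cases c) (simp add: det3_def cross_def algebra_simps)

lemma incident_cross_iff: "incident a (cross b c) \<longleftrightarrow> det3 a b c = 0"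
  by (cases a; cases b; cases c) (simp add: incident_def cross_def det3_def algebra_simps)

lemma det3_mult:
  fixes r11 r12 r13 r21 r22 r23 r31 r32 r33 x1 x2 x3 y1 y2 y3 z1 z2 z3 :: "'a::comm_ring_1"
  shows "det3 (r11*x1 + r12*x2 + r13*x3, r21*x1 + r22*x2 + r23*x3, r31*x1 + r32*x2 + r33*x3)
              (r11*y1 + r12*y2 + r13*y3, r21*y1 + r22*y2 + r23*y3, r31*y1 + r32*y2 + r33*y3)
              (r11*z1 + r12*z2 + r13*z3, r21*z1 + r22*z2 + r23*z3, r31*z1 + r32*z2 + r33*z3)
       = det3 (r11, r12, r13) (r21, r22, r23) (r31, r32, r33) * det3 (x1, x2, x3) (y1, y2, y3) (z1, z2, z3)"
  unfolding det3_def prod.case by (simp add: algebra_simps)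

lemma det3_adjugate: "det3 (cross b p) (cross p a) (cross a b) = (det3 a b p)\<^sup>2"
  by (cases a rule: prod_cases3; cases b rule: prod_cases3; cases p rule: prod_cases3)
    (simp add: det3_def cross_def algebra_simps power2_eq_square)

text \<open>The linear forms \<open>X \<mapsto> det3 X b p\<close>, \<open>det3 a X p\<close>, \<open>det3 a b X\<close> are the rows of the
  adjugate of the matrix with columns \<open>a, b, p\<close>, hence form a change of coordinates with
  determinant \<open>(det3 a b p)\<^sup>2\<close>.\<close>
lemma det3_change_of_frame:
  fixes a b p X Y Z :: "'a::comm_ring_1 \<times> 'a \<times> 'a"
  shows "det3 (det3 X b p, det3 a X p, det3 a b X) (det3 Y b p, det3 a Y p, det3 a b Y)
              (det3 Z b p, det3 a Z p, det3 a b Z) = (det3 a b p)\<^sup>2 * det3 X Y Z"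
proof -
  obtain r11 r12 r13 where r1: "cross b p = (r11, r12, r13)" by (cases "cross b p") auto
  obtain r21 r22 r23 where r2: "cross p a = (r21, r22, r23)" by (cases "cross p a") auto
  obtain r31 r32 r33 where r3: "cross a b = (r31, r32, r33)" by (cases "cross a b") auto
  have forms: "det3 (v1, v2, v3) b p = r11 * v1 + r12 * v2 + r13 * v3"
    "det3 a (v1, v2, v3) p = r21 * v1 + r22 * v2 + r23 * v3"
    "det3 a b (v1, v2, v3) = r31 * v1 + r32 * v2 + r33 * v3" for v1 v2 v3
  proof -
    show "det3 (v1, v2, v3) b p = r11 * v1 + r12 * v2 + r13 * v3"
      by (simp add: det3_eq_inner_cross r1)
    have "det3 (v1, v2, v3) p a = r21 * v1 + r22 * v2 + r23 * v3"
      by (simp add: det3_eq_inner_cross r2)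
    then show "det3 a (v1, v2, v3) p = r21 * v1 + r22 * v2 + r23 * v3"
      by (simp only: det3_rotate[of a "(v1, v2, v3)" p])
    have "det3 (v1, v2, v3) a b = r31 * v1 + r32 * v2 + r33 * v3"
      by (simp add: det3_eq_inner_cross r3)
    then show "det3 a b (v1, v2, v3) = r31 * v1 + r32 * v2 + r33 * v3"
      by (simp only: det3_rotate[of "(v1, v2, v3)" a b])
  qed
  have "det3 (r11, r12, r13) (r21, r22, r23) (r31, r32, r33) = (det3 a b p)\<^sup>2"
    using det3_adjugate[of b p a] det3_rotate[of b p a] by (simp add: r1 r2 r3)
  then show ?thesis
    by (cases X; cases Y; cases Z) (simp only: forms det3_mult)
qed

lemma normalized_nonzero: "normalized v \<Longrightarrow> v \<noteq> (0, 0, 0)"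
  by (auto simp: normalized_def)

lemma normalized_proj_normalize: "normalized (proj_normalize v)"
  by (cases v) (auto simp: proj_normalize_def normalized_def)

lemma incident_proj_normalize_iff: "v \<noteq> (0, 0, 0) \<Longrightarrow> incident P (proj_normalize v) \<longleftrightarrow> incident P v"
  by (cases v; cases P) (auto simp: proj_normalize_def incident_def field_simps split: if_splits)

lemma cross_eq_0_imp_eq:
  fixes a b :: "'a::field \<times> 'a \<times> 'a"
  shows "normalized a \<Longrightarrow> normalized b \<Longrightarrow> cross a b = (0, 0, 0) \<Longrightarrow> a = b"
  by (cases a; cases b) (auto simp: normalized_def cross_def)

lemma line_through_in_proj_lines: "line_through X Y \<in> proj_lines"
  by (simp add: line_through_def proj_lines_def normalized_proj_normalize)

lemma incident_line_through_iff:
  fixes X Y Z :: "'a::field \<times> 'a \<times> 'a"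
  assumes "normalized X" "normalized Y" "X \<noteq> Y"
  shows "incident Z (line_through X Y) \<longleftrightarrow> det3 X Y Z = 0"
proof -
  have "cross X Y \<noteq> (0, 0, 0)" using cross_eq_0_imp_eq assms by blast
  then show ?thesis
    by (simp add: line_through_def incident_proj_normalize_iff incident_cross_iff det3_rotate)
qed

lemma det3_eq_0_if_incident:
  fixes l a b c :: "'a::field \<times> 'a \<times> 'a"
  assumes "l \<noteq> (0, 0, 0)" "incident a l" "incident b l" "incident c l"
  shows "det3 a b c = 0"
proof -
  obtain a1 a2 a3 b1 b2 b3 c1 c2 c3 l1 l2 l3 where
    coords: "a = (a1, a2, a3)" "b = (b1, b2, b3)" "c = (c1, c2, c3)" "l = (l1, l2, l3)"
    by (cases a; cases b; cases c; cases l) auto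
  let ?d = "a1 * (b2 * c3 - b3 * c2) - a2 * (b1 * c3 - b3 * c1) + a3 * (b1 * c2 - b2 * c1)"
  have "l1 * a1 + l2 * a2 + l3 * a3 = 0" "l1 * b1 + l2 * b2 + l3 * b3 = 0" "l1 * c1 + l2 * c2 + l3 * c3 = 0"
    using assms coords by (auto simp: incident_def)
  then have "?d * l1 = 0" "?d * l2 = 0" "?d * l3 = 0" by algebra+
  with assms(1) coords show ?thesis by (auto simp: det3_def)
qed

lemma incident_if_det3_eq_0:
  fixes l a b c :: "'a::field \<times> 'a \<times> 'a"
  assumes "normalized b" "normalized c" "b \<noteq> c" "incident b l" "incident c l" "det3 a b c = 0"
  shows "incident a l"
proof -
  have "cross b c \<noteq> (0, 0, 0)" using cross_eq_0_imp_eq assms by blast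
  obtain a1 a2 a3 b1 b2 b3 c1 c2 c3 l1 l2 l3 where
    coords: "a = (a1, a2, a3)" "b = (b1, b2, b3)" "c = (c1, c2, c3)" "l = (l1, l2, l3)"
    by (cases a; cases b; cases c; cases l) auto
  let ?s = "l1 * a1 + l2 * a2 + l3 * a3"
  have "l1 * b1 + l2 * b2 + l3 * b3 = 0" "l1 * c1 + l2 * c2 + l3 * c3 = 0"
    "a1 * (b2 * c3 - b3 * c2) - a2 * (b1 * c3 - b3 * c1) + a3 * (b1 * c2 - b2 * c1) = 0"
    using assms coords by (auto simp: incident_def det3_def)
  then have "?s * (b2 * c3 - b3 * c2) = 0" "?s * (b3 * c1 - b1 * c3) = 0" "?s * (b1 * c2 - b2 * c1) = 0"
    by algebra+
  with \<open>cross b c \<noteq> (0, 0, 0)\<close> coords show ?thesis by (auto simp: cross_def incident_def)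
qed

lemma inj_on_of_nat_atMost:
  assumes "CHAR('a::ring_1) = 0 \<or> CHAR('a) > n"
  shows "inj_on (of_nat :: nat \<Rightarrow> 'a) {..n}"
proof -
  have "j = k" if "j < k" "k \<le> n" "(of_nat j :: 'a) = of_nat k" for j k
  proof -
    from that have "CHAR('a) dvd (k - j)"
      by (simp add: of_nat_diff flip: of_nat_eq_0_iff_char_dvd)
    with that assms show ?thesis by (auto dest: dvd_imp_le)
  qed
  then show ?thesis
    by (intro inj_onI) (metis atMost_iff linorder_neqE_nat)
qed

lemma finite_translation_closed_empty:
  fixes S :: "'a::field set"
  assumes "finite S" "CHAR('a) = 0 \<or> CHAR('a) > card S" "d \<noteq> 0" "\<And>y. y \<in> S \<Longrightarrow> y + d \<in> S"
  shows "S = {}"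
proof (rule equals0I)
  fix y assume "y \<in> S"
  define orbit where "orbit k = y + of_nat k * d" for k :: nat
  have "orbit k \<in> S" for k
  proof (induction k)
    case (Suc k)
    have "orbit (Suc k) = orbit k + d" by (simp add: orbit_def algebra_simps)
    with Suc assms(4) show ?case by simp
  qed (simp add: orbit_def \<open>y \<in> S\<close>)
  then have "orbit ` {..card S} \<subseteq> S" by blast
  moreover have "inj_on orbit {..card S}"
  proof (rule inj_onI)
    fix j k assume "j \<in> {..card S}" "k \<in> {..card S}" "orbit j = orbit k"
    then have "(of_nat j :: 'a) = of_nat k" using \<open>d \<noteq> 0\<close> by (simp add: orbit_def)
    with inj_on_of_nat_atMost[OF assms(2)] show "j = k"
      using \<open>j \<in> {..card S}\<close> \<open>k \<in> {..card S}\<close> by (rule inj_onD)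
  qed
  ultimately have "card {..card S} \<le> card S"
    using card_mono[OF \<open>finite S\<close>] card_image by metis
  then show False by simp
qed

locale regular_dual_3net =
  fixes L1 L2 L3 :: "('a::field \<times> 'a \<times> 'a) set" and n :: nat and l1 l2 l3 :: "'a \<times> 'a \<times> 'a"
  assumes dual_3net: "dual_3net L1 L2 L3 n"
    and order_ge_2: "2 \<le> n"
    and sides: "l1 \<in> proj_lines" "l2 \<in> proj_lines" "l3 \<in> proj_lines"
    and components_on_sides: "L1 \<subseteq> points_on l1" "L2 \<subseteq> points_on l2" "L3 \<subseteq> points_on l3"
begin

definition component :: "nat \<Rightarrow> ('a \<times> 'a \<times> 'a) set" where
  "component i = (if i = 1 then L1 else if i = 2 then L2 else L3)"

definition side :: "nat \<Rightarrow> 'a \<times> 'a \<times> 'a" where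
  "side i = (if i = 1 then l1 else if i = 2 then l2 else l3)"

lemma component_simps [simp]:
  "component 1 = L1" "component (Suc 0) = L1" "component 2 = L2" "component 3 = L3"
  by (simp_all add: component_def)

lemma side_simps [simp]: "side 1 = l1" "side (Suc 0) = l1" "side 2 = l2" "side 3 = l3"
  by (simp_all add: side_def)

lemma component_eq_if_not_index: "i \<notin> {1, 2, 3} \<Longrightarrow> component i = component 3"
  by (simp add: component_def)

lemma dual_3net_components:
  "(\<forall>i\<in>{1, 2, 3}. component i \<subseteq> proj_points \<and> finite (component i) \<and> card (component i) = n) \<and>
   (\<forall>i\<in>{1, 2, 3}. \<forall>j\<in>{1, 2, 3}. i \<noteq> j \<longrightarrow> component i \<inter> component j = {}) \<and>
   (\<forall>l\<in>proj_lines. (\<exists>i\<in>{1, 2, 3}. \<exists>j\<in>{1, 2, 3}. i \<noteq> j \<and>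
        points_on l \<inter> component i \<noteq> {} \<and> points_on l \<inter> component j \<noteq> {}) \<longrightarrow>
      (\<forall>k\<in>{1, 2, 3}. card (points_on l \<inter> component k) = 1))"
  using dual_3net unfolding dual_3net_def Let_def component_def .

lemma
  shows component_subset_proj_points: "component i \<subseteq> proj_points"
    and finite_component: "finite (component i)"
    and card_component: "card (component i) = n"
proof -
  have "component j \<subseteq> proj_points \<and> finite (component j) \<and> card (component j) = n" for j
    using dual_3net_components component_eq_if_not_index[of j] by (cases "j \<in> {1, 2, 3}") auto
  then show "component i \<subseteq> proj_points" "finite (component i)" "card (component i) = n"
    by blast+
qed

lemma component_nonempty: "component i \<noteq> {}"
  using card_component[of i] order_ge_2 by auto

lemma components_disjoint:
  "i \<in> {1, 2, 3} \<Longrightarrow> j \<in> {1, 2, 3} \<Longrightarrow> i \<noteq> j \<Longrightarrow> component i \<inter> component j = {}"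
  using dual_3net_components by blast

lemma card_line_inter_component:
  assumes "l \<in> proj_lines" "i \<in> {1, 2, 3}" "j \<in> {1, 2, 3}" "i \<noteq> j"
    and "X \<in> component i" "Y \<in> component j" "incident X l" "incident Y l"
  shows "card (points_on l \<inter> component k) = 1"
proof -
  have "X \<in> points_on l \<inter> component i" "Y \<in> points_on l \<inter> component j"
    using assms component_subset_proj_points by (auto simp: points_on_def)
  then have "\<forall>k\<in>{1, 2, 3}. card (points_on l \<inter> component k) = 1"
    using dual_3net_components assms(1-4) by blast
  then show ?thesis
    using component_eq_if_not_index[of k] by (cases "k \<in> {1, 2, 3}") auto
qed

lemma side_in_proj_lines: "side i \<in> proj_lines"
  using sides by (simp add: side_def)

lemma component_on_side: "X \<in> component i \<Longrightarrow> incident X (side i)"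
  using components_on_sides by (auto simp: component_def side_def points_on_def split: if_splits)

text \<open>A side meeting a second component would meet its own component in a single point,
  but it contains all \<open>n \<ge> 2\<close> of them.\<close>
lemma component_not_on_other_side:
  assumes "i \<in> {1, 2, 3}" "j \<in> {1, 2, 3}" "i \<noteq> j" "X \<in> component i"
  shows "\<not> incident X (side j)"
proof
  assume "incident X (side j)"
  obtain Y where "Y \<in> component j" using component_nonempty by blast
  then have "card (points_on (side j) \<inter> component j) = 1"
    using card_line_inter_component[OF side_in_proj_lines assms(1-4)] \<open>incident X (side j)\<close>
      component_on_side by blast
  moreover have "points_on (side j) \<inter> component j = component j"
    unfolding points_on_def using component_on_side component_subset_proj_points by blast
  ultimately show False
    using card_component order_ge_2 by simp
qed

lemma collinear_point_unique:
  assumes "i \<in> {1, 2, 3}" "j \<in> {1, 2, 3}" "i \<noteq> j" "X \<in> component i" "Y \<in> component j"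
  shows "\<exists>!Z. Z \<in> component k \<and> det3 X Y Z = 0"
proof -
  have norm: "normalized X" "normalized Y"
    using assms(4,5) component_subset_proj_points by (auto simp: proj_points_def)
  have "X \<noteq> Y" using components_disjoint assms by blast
  note on_line = incident_line_through_iff[OF norm \<open>X \<noteq> Y\<close>]
  have "card (points_on (line_through X Y) \<inter> component k) = 1"
    by (rule card_line_inter_component[OF line_through_in_proj_lines assms]) (simp_all add: on_line)
  moreover have "points_on (line_through X Y) \<inter> component k = {Z \<in> component k. det3 X Y Z = 0}"
    using component_subset_proj_points by (auto simp: points_on_def on_line)
  ultimately obtain Z where "{Z \<in> component k. det3 X Y Z = 0} = {Z}"
    by (metis card_1_singletonE)
  then show ?thesis
    by (metis (mono_tags, lifting) mem_Collect_eq singleton_iff)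
qed

end

locale concurrent_regular_dual_3net = regular_dual_3net +
  fixes P a0 b0 c0 :: "'a \<times> 'a \<times> 'a"
  assumes common_point: "P \<in> points_on l1" "P \<in> points_on l2" "P \<in> points_on l3"
    and base_points: "a0 \<in> L1" "b0 \<in> L2" "c0 \<in> L3"
begin

lemma common_point_on_side: "incident P (side i)"
  using common_point by (simp add: side_def points_on_def)

lemma normalized_common_point: "normalized P"
  using common_point by (simp add: points_on_def proj_points_def)

lemma det3_common_point_eq_0_iff:
  assumes "j \<in> {1, 2, 3}" "Y \<in> component j"
  shows "det3 X Y P = 0 \<longleftrightarrow> incident X (side j)"
proof
  have Y_side: "incident Y (side j)" using assms(2) by (rule component_on_side)
  assume "det3 X Y P = 0"
  have "normalized Y" using assms(2) component_subset_proj_points by (auto simp: proj_points_def)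
  moreover have "Y \<noteq> P"
  proof -
    define i :: nat where "i = (if j = 1 then 2 else 1)"
    have "i \<in> {1, 2, 3}" "j \<noteq> i" by (auto simp: i_def)
    then have "\<not> incident Y (side i)" using component_not_on_other_side assms by blast
    then show ?thesis using common_point_on_side by metis
  qed
  ultimately show "incident X (side j)"
    using incident_if_det3_eq_0 normalized_common_point Y_side common_point_on_side \<open>det3 X Y P = 0\<close> by blast
next
  assume "incident X (side j)"
  then show "det3 X Y P = 0"
    using side_in_proj_lines[of j] component_on_side[OF assms(2)] common_point_on_side[of j]
    by (intro det3_eq_0_if_incident[OF normalized_nonzero]) (auto simp: proj_lines_def)
qed

text \<open>Projective coordinates \<open>(U : V : W)\<close> in which \<open>P = (0 : 0 : 1)\<close>, \<open>l\<^sub>1\<close> is \<open>V = 0\<close> and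
  \<open>l\<^sub>2\<close> is \<open>U = 0\<close>.\<close>

definition U :: "'a \<times> 'a \<times> 'a \<Rightarrow> 'a" where "U X = det3 X b0 P"
definition V :: "'a \<times> 'a \<times> 'a \<Rightarrow> 'a" where "V X = det3 a0 X P"
definition W :: "'a \<times> 'a \<times> 'a \<Rightarrow> 'a" where "W X = det3 a0 b0 X"

lemma U_eq_0_iff: "U X = 0 \<longleftrightarrow> incident X l2"
  using det3_common_point_eq_0_iff[of 2 b0 X] base_points by (simp add: U_def)

lemma V_eq_0_iff: "V X = 0 \<longleftrightarrow> incident X l1"
  using det3_common_point_eq_0_iff[of 1 a0 X] base_points det3_swap12[of a0 X P] by (simp add: V_def)

lemma frame_coords_common_point: "U P = 0" "V P = 0" "W P = V b0"
  by (simp_all add: U_def V_def W_def)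

lemma det3_frame_coords:
  "det3 (U X, V X, W X) (U Y, V Y, W Y) (U Z, V Z, W Z) = (V b0)\<^sup>2 * det3 X Y Z"
  unfolding U_def V_def W_def by (rule det3_change_of_frame)

lemma frame_coords_components:
  "a \<in> L1 \<Longrightarrow> V a = 0" "a \<in> L1 \<Longrightarrow> U a \<noteq> 0"
  "b \<in> L2 \<Longrightarrow> U b = 0" "b \<in> L2 \<Longrightarrow> V b \<noteq> 0"
  "c \<in> L3 \<Longrightarrow> U c \<noteq> 0" "c \<in> L3 \<Longrightarrow> V c \<noteq> 0"
  using component_on_side[of _ 1] component_on_side[of _ 2]
    component_not_on_other_side[of 1 2] component_not_on_other_side[of 2 1]
    component_not_on_other_side[of 3 1] component_not_on_other_side[of 3 2]
  by (auto simp: U_eq_0_iff V_eq_0_iff)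

definition slope :: 'a where "slope = V c0 / U c0"

lemma slope_nonzero: "slope \<noteq> 0"
  using frame_coords_components(5,6) base_points(3) by (simp add: slope_def)

lemma V_on_L3:
  assumes "c \<in> L3"
  shows "V c = slope * U c"
proof -
  have "det3 c c0 P = 0"
    using det3_common_point_eq_0_iff[of 3 c0 c] base_points(3) component_on_side[of c 3] assms by simp
  then have "det3 (U c, V c, W c) (U c0, V c0, W c0) (U P, V P, W P) = 0"
    by (simp only: det3_frame_coords mult_zero_right)
  then have "V b0 * (U c * V c0 - V c * U c0) = 0"
    by (simp add: frame_coords_common_point det3_def algebra_simps)
  then have "U c * V c0 = V c * U c0"
    using frame_coords_components(4) base_points(2) by simp
  then show ?thesis
    using frame_coords_components(5) assms base_points(3) by (simp add: slope_def field_simps)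
qed

definition coord1 :: "'a \<times> 'a \<times> 'a \<Rightarrow> 'a" where "coord1 a = W a / U a"
definition coord2 :: "'a \<times> 'a \<times> 'a \<Rightarrow> 'a" where "coord2 b = W b / V b"
definition coord3 :: "'a \<times> 'a \<times> 'a \<Rightarrow> 'a" where "coord3 c = W c / U c"

lemma collinear_iff_coords:
  assumes "a \<in> L1" "b \<in> L2" "c \<in> L3"
  shows "det3 a b c = 0 \<longleftrightarrow> coord3 c = coord1 a + slope * coord2 b"
proof -
  have nonzero: "U a \<noteq> 0" "V b \<noteq> 0" "U c \<noteq> 0" "V b0 \<noteq> 0"
    using frame_coords_components assms base_points by auto
  have "(V b0)\<^sup>2 * det3 a b c = det3 (U a, 0, W a) (0, V b, W b) (U c, slope * U c, W c)"
    using det3_frame_coords[of a b c] frame_coords_components(1,3) V_on_L3 assms by simp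
  also have "\<dots> = U a * V b * U c * (coord3 c - coord1 a - slope * coord2 b)"
    using nonzero by (simp add: det3_def coord1_def coord2_def coord3_def field_simps)
  finally have "(V b0)\<^sup>2 * det3 a b c = U a * V b * U c * (coord3 c - coord1 a - slope * coord2 b)" .
  then have "det3 a b c = 0 \<longleftrightarrow> coord3 c - coord1 a - slope * coord2 b = 0"
    using nonzero by (metis mult_eq_0_iff power_not_zero)
  then show ?thesis
    by (auto simp: algebra_simps)
qed

lemma coord1_inj_on: "inj_on coord1 L1"
proof (rule inj_onI)
  fix a a' assume a: "a \<in> L1" "a' \<in> L1" "coord1 a = coord1 a'"
  obtain c where c: "c \<in> L3" "det3 a b0 c = 0"
    using collinear_point_unique[of 1 2 a b0 3] a(1) base_points(2) by auto
  then have "det3 a' b0 c = 0"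
    using collinear_iff_coords a base_points(2) by simp
  moreover have "\<exists>!Z. Z \<in> L1 \<and> det3 b0 c Z = 0"
    using collinear_point_unique[of 2 3 b0 c 1] base_points(2) c(1) by simp
  ultimately show "a = a'"
    using a c det3_rotate[of a b0 c] det3_rotate[of a' b0 c] by metis
qed

text \<open>Walking from \<open>b\<close> to \<open>\<Lambda>\<^sub>3\<close> through \<open>a\<close> and back to \<open>\<Lambda>\<^sub>2\<close> through \<open>a'\<close>
  translates the coordinate by a fixed amount.\<close>
lemma coord2_translate:
  assumes "a \<in> L1" "a' \<in> L1" "b \<in> L2"
  shows "\<exists>b'\<in>L2. coord2 b' = coord2 b + (coord1 a - coord1 a') / slope"
proof -
  obtain c where c: "c \<in> L3" "det3 a b c = 0"
    using collinear_point_unique[of 1 2 a b 3] assms by auto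
  obtain b' where b': "b' \<in> L2" "det3 a' c b' = 0"
    using collinear_point_unique[of 1 3 a' c 2] assms c(1) by auto
  have "coord3 c = coord1 a + slope * coord2 b" "coord3 c = coord1 a' + slope * coord2 b'"
    using collinear_iff_coords assms b' c det3_swap23[of a' c b'] by auto
  then have "coord2 b' = coord2 b + (coord1 a - coord1 a') / slope"
    using slope_nonzero by (simp add: field_simps)
  with b' show ?thesis by blast
qed

lemma CHAR_pos_le_order: "0 < CHAR('a) \<and> CHAR('a) \<le> n"
proof (rule ccontr)
  assume "\<not> (0 < CHAR('a) \<and> CHAR('a) \<le> n)"
  then have char: "CHAR('a) = 0 \<or> CHAR('a) > card (coord2 ` L2)"
    using card_image_le[OF finite_component[of 2], of coord2] card_component[of 2] by auto
  have "\<not> card L1 \<le> Suc 0"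
    using card_component[of 1] order_ge_2 by simp
  then obtain a a' where a: "a \<in> L1" "a' \<in> L1" "a \<noteq> a'"
    using card_le_Suc0_iff_eq[OF finite_component[of 1]] by (simp only: component_simps) blast
  define d where "d = (coord1 a - coord1 a') / slope"
  have "coord1 a \<noteq> coord1 a'"
    using inj_onD[OF coord1_inj_on] a by blast
  then have "d \<noteq> 0"
    using slope_nonzero by (simp add: d_def)
  moreover have "y + d \<in> coord2 ` L2" if y: "y \<in> coord2 ` L2" for y
  proof -
    obtain b where b: "b \<in> L2" "y = coord2 b" using y by blast
    then obtain b' where "b' \<in> L2" "coord2 b' = y + d"
      using coord2_translate[OF a(1,2) b(1)] unfolding d_def by blast
    then show ?thesis by (metis image_eqI)
  qed
  moreover have "finite (coord2 ` L2)"
    using finite_component[of 2] by simp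
  ultimately have "coord2 ` L2 = {}"
    using finite_translation_closed_empty char by blast
  then show False
    using base_points(2) by blast
qed

end

theorem lemma4p2:
  fixes L1 L2 L3 :: "('a::alg_closed_field \<times> 'a \<times> 'a) set" and n :: nat
  assumes "CHAR('a) = 0 \<or> CHAR('a) > n"
    and "n \<ge> 4"
    and "dual_3net L1 L2 L3 n"
    and "regular_3net L1 L2 L3"
  shows "triangular_3net L1 L2 L3"
proof -
  obtain l1 l2 l3 where lines: "l1 \<in> proj_lines" "l2 \<in> proj_lines" "l3 \<in> proj_lines"
    "l1 \<noteq> l2" "l1 \<noteq> l3" "l2 \<noteq> l3" "L1 \<subseteq> points_on l1" "L2 \<subseteq> points_on l2" "L3 \<subseteq> points_on l3"
    using assms(4) unfolding regular_3net_def by blast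
  interpret regular_dual_3net L1 L2 L3 n l1 l2 l3
    using assms(2,3) lines by unfold_locales auto
  have "points_on l1 \<inter> points_on l2 \<inter> points_on l3 = {}"
  proof (rule ccontr)
    assume "points_on l1 \<inter> points_on l2 \<inter> points_on l3 \<noteq> {}"
    then obtain P where "P \<in> points_on l1" "P \<in> points_on l2" "P \<in> points_on l3" by blast
    moreover obtain a0 b0 c0 where "a0 \<in> L1" "b0 \<in> L2" "c0 \<in> L3"
      using component_nonempty[of 1] component_nonempty[of 2] component_nonempty[of 3] by auto
    ultimately interpret concurrent_regular_dual_3net L1 L2 L3 n l1 l2 l3 P a0 b0 c0
      by unfold_locales
    show False using CHAR_pos_le_order assms(1) by simp
  qed
  with lines show ?thesis unfolding triangular_3net_def by blast
qed

end
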